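(* Let $\mathcal{S}=\{S_1,\dots,S_N\}\subset\mathbb{R}^Q_{\ge0}$ be a finite set of service vectors and suppose the system is overloaded, $\rho\notin\mathcal{P}$. Let $\theta\in\mathbb{R}^Q_{\ge0}$ with $\sum_q\theta_q=1$ be a fairness criterion. Let $X(t)$ be the workload under the MaxWeight policy with some diagonal positive definite matrix $\Delta$, and let $\bar X(t)$ be the workload under some other scheduling algorithm (choosing a service vector from $\mathcal{S}$ in each slot, with the same queue dynamics), such that $$\lim_{t\to\infty}\frac{X(t)}{t}=\eta,\qquad \lim_{t\to\infty}\frac{\bar X(t)}{t}=\bar\eta,$$ and both achieve the fairness criterion: $\frac{\eta_q}{\sum_k\eta_k}=\frac{\bar\eta_q}{\sum_k\bar\eta_k}=\theta_q$ for all $q$. Then $\eta\le\bar\eta$ (componentwise), i.e. $\eta$ is the minimal scaled workload vector achieving the fairness criterion $\theta$.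
   Context: Model: $Q$ queues, discrete time $t=0,1,2,\dots$. Arrivals $A(t)$ with $0\le A_q(t)\le\bar A_q<\infty$ and $\rho_q=\lim_{t\to\infty}\frac1t\sum_{s=0}^{t-1}A_q(s)\in(0,\infty)$. In slot $t$ a service vector $S(t)\in\mathcal{S}$ is used; departures $D_q(t)=\min\{S_q(t),X_q(t)\}$; $X(t+1)=X(t)+A(t)-D(t)$, $X(0)=0$. MaxWeight with matrix $\Delta$ (diagonal, positive diagonal entries): $S(t)\in\arg\max_{S\in\mathcal{S}}\langle S,\Delta X(t)\rangle$. Stability region $\mathcal{P}=\{r\in\mathbb{R}^Q_{\ge0}: r\le\sum_n\alpha_nS_n\text{ for some }\alpha_n\ge0,\ \sum_n\alpha_n=1\}$. *)

theory Defs
  imports "HOL-Analysis.Analysis"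
begin

definition queue_dynamics :: "(nat \<Rightarrow> 'q \<Rightarrow> real) \<Rightarrow> (nat \<Rightarrow> 'q \<Rightarrow> real) \<Rightarrow> (nat \<Rightarrow> 'q \<Rightarrow> real) \<Rightarrow> bool" where
  "queue_dynamics A S X \<longleftrightarrow>
     X 0 = (\<lambda>q. 0) \<and>
     (\<forall>t q. X (Suc t) q = X t q + A t q - min (S t q) (X t q))"

text \<open>Weighted inner product <S, Delta X> for the diagonal matrix Delta = diag(delta).\<close>
definition weighted_inner :: "('q::finite \<Rightarrow> real) \<Rightarrow> ('q \<Rightarrow> real) \<Rightarrow> ('q \<Rightarrow> real) \<Rightarrow> real" where
  "weighted_inner \<delta> S X = (\<Sum>q\<in>UNIV. S q * (\<delta> q * X q))"

definition maxweight_schedule :: "('q::finite \<Rightarrow> real) set \<Rightarrow> ('q \<Rightarrow> real) \<Rightarrow> (nat \<Rightarrow> 'q \<Rightarrow> real) \<Rightarrow> (nat \<Rightarrow> 'q \<Rightarrow> real) \<Rightarrow> bool" where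
  "maxweight_schedule SS \<delta> S X \<longleftrightarrow>
     (\<forall>t. S t \<in> SS \<and> (\<forall>S'\<in>SS. weighted_inner \<delta> S' (X t) \<le> weighted_inner \<delta> (S t) (X t)))"

definition stability_region :: "('q \<Rightarrow> real) set \<Rightarrow> ('q \<Rightarrow> real) set" where
  "stability_region SS = {r. (\<forall>q. 0 \<le> r q) \<and>
     (\<exists>\<alpha>. (\<forall>s\<in>SS. 0 \<le> \<alpha> s) \<and> (\<Sum>s\<in>SS. \<alpha> s) = 1 \<and>
          (\<forall>q. r q \<le> (\<Sum>s\<in>SS. \<alpha> s * s q)))}"

end

theory Submission imports Defs begin

text \<open>Compare the two workloads through f(t) = \<langle>\<Delta>\<eta>, X(t) - X'(t)\<rangle>. Once a queue with \<eta> q > 0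
is longer than every service rate, MaxWeight serves it at full rate, so the increment of f is at
most \<langle>\<Delta>\<eta>, S'(t) - S(t)\<rangle>. Replacing \<eta> by X(t)/t costs o(1), and \<langle>\<Delta>(S'(t) - S(t)), X(t)\<rangle> \<le> 0
by the MaxWeight choice; hence f grows sublinearly and \<langle>\<Delta>\<eta>, \<eta> - \<eta>'\<rangle> \<le> 0. Fairness makes both
limits multiples of \<theta>, say \<eta> = c \<theta> and \<eta>' = c' \<theta>, and then the inequality reads
c (c - c') \<langle>\<Delta>\<theta>, \<theta>\<rangle> \<le> 0, i.e. c \<le> c'.\<close>

lemma limit_div_nonpos_of_increments_eventually_le:
  fixes f :: "nat \<Rightarrow> real"
  assumes lim: "(\<lambda>t. f t / real t) \<longlonglongrightarrow> L"
    and incr: "\<And>e. e > 0 \<Longrightarrow> eventually (\<lambda>t. f (Suc t) - f t \<le> e) sequentially"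
  shows "L \<le> 0"
proof (rule field_le_epsilon)
  fix e :: real assume e: "0 < e"
  obtain T where T: "\<And>t. t \<ge> T \<Longrightarrow> f (Suc t) - f t \<le> e"
    using incr[OF e] unfolding eventually_sequentially by blast
  have linear_bound: "f t \<le> f T + e * (real t - real T)" if "t \<ge> T" for t
    using that
  proof (induction t rule: dec_induct)
    case (step n) then show ?case using T[of n] by (simp add: algebra_simps)
  qed simp
  have "(\<lambda>t. (f T - e * real T) / real t + e) \<longlonglongrightarrow> 0 + e"
    by (intro tendsto_intros)
  moreover have "eventually (\<lambda>t. f t / real t \<le> (f T - e * real T) / real t + e) sequentially"
    unfolding eventually_sequentially
  proof (intro exI allI impI)
    fix t assume "t \<ge> Suc T"
    then have "real t > 0" and "f t \<le> (f T - e * real T) + e * real t"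
      using linear_bound by (auto simp: algebra_simps)
    then show "f t / real t \<le> (f T - e * real T) / real t + e"
      by (simp add: field_simps)
  qed
  ultimately show "L \<le> 0 + e"
    by (intro tendsto_le[OF _ _ lim]) auto
qed

lemma eventually_ge_of_tendsto_div_pos:
  fixes x :: "nat \<Rightarrow> real"
  assumes lim: "(\<lambda>t. x t / real t) \<longlonglongrightarrow> \<eta>" and pos: "0 < \<eta>"
  shows "eventually (\<lambda>t. B \<le> x t) sequentially"
proof -
  have "filterlim (\<lambda>t. x t / real t * real t) at_top sequentially"
    using lim pos filterlim_real_sequentially by (intro filterlim_tendsto_pos_mult_at_top)
  moreover have "eventually (\<lambda>t. x t / real t * real t = x t) sequentially"
    unfolding eventually_sequentially by (intro exI[of _ 1]) auto
  ultimately have "filterlim x at_top sequentially"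
    using filterlim_cong by fastforce
  then show ?thesis
    unfolding filterlim_at_top by blast
qed

lemma queue_dynamics_Suc:
  "queue_dynamics A S X \<Longrightarrow> X (Suc t) q = X t q + A t q - min (S t q) (X t q)"
  by (simp add: queue_dynamics_def)

lemma queue_dynamics_nonneg:
  assumes dyn: "queue_dynamics A S X" and arrivals: "\<forall>t q. 0 \<le> A t q"
  shows "0 \<le> X t q"
proof (induction t)
  case 0 then show ?case using dyn by (simp add: queue_dynamics_def)
next
  case (Suc t)
  have "A t q \<le> X (Suc t) q"
    by (simp add: queue_dynamics_Suc[OF dyn])
  then show ?case using arrivals by (meson order_trans)
qed

lemma queue_dynamics_growth_rate_nonneg:
  assumes dyn: "queue_dynamics A S X" and arrivals: "\<forall>t q. 0 \<le> A t q"
    and lim: "(\<lambda>t. X t q / real t) \<longlonglongrightarrow> \<eta>"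
  shows "0 \<le> \<eta>"
  using lim queue_dynamics_nonneg[OF dyn arrivals] by (intro LIMSEQ_le_const) auto

text \<open>The arrivals cancel, so only the departures of the two systems enter the increment.\<close>
lemma weighted_gap_increment_le_service_gap:
  fixes w :: "'q::finite \<Rightarrow> real"
  assumes dyn: "queue_dynamics A S X" and dyn': "queue_dynamics A S' X'"
    and w_nonneg: "\<And>q. 0 \<le> w q"
    and full_service: "\<And>q. 0 < w q \<Longrightarrow> S t q \<le> X t q"
  shows "(\<Sum>q\<in>UNIV. w q * (X (Suc t) q - X' (Suc t) q)) - (\<Sum>q\<in>UNIV. w q * (X t q - X' t q))
           \<le> (\<Sum>q\<in>UNIV. w q * (S' t q - S t q))"
proof -
  have "w q * (X (Suc t) q - X' (Suc t) q) - w q * (X t q - X' t q) \<le> w q * (S' t q - S t q)" for q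
  proof (cases "w q = 0")
    case False
    then have "min (S t q) (X t q) = S t q"
      using full_service w_nonneg[of q] by (simp add: order_less_le)
    then show ?thesis
      using w_nonneg[of q] by (simp add: queue_dynamics_Suc[OF dyn] queue_dynamics_Suc[OF dyn']
          right_diff_distrib[symmetric] mult_left_mono)
  qed simp
  then show ?thesis
    unfolding sum_subtractf[symmetric] by (rule sum_mono)
qed

text \<open>Split \<eta> = (\<eta> - X(t)/t) + X(t)/t: the second part contributes \<le> 0 by the MaxWeight choice
(also for t = 0, where X(t)/t = 0).\<close>
lemma maxweight_service_gap_le:
  fixes SS :: "('q::finite \<Rightarrow> real) set"
  assumes MW: "maxweight_schedule SS \<delta> S X" and s': "s' \<in> SS"
    and bounded: "\<forall>s\<in>SS. \<forall>q. 0 \<le> s q \<and> s q \<le> B" and delta_pos: "\<forall>q. 0 < \<delta> q"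
  shows "(\<Sum>q\<in>UNIV. \<delta> q * \<eta> q * (s' q - S t q)) \<le> (\<Sum>q\<in>UNIV. B * \<delta> q * \<bar>\<eta> q - X t q / real t\<bar>)"
proof -
  let ?e = "\<lambda>q. \<eta> q - X t q / real t"
  have St: "S t \<in> SS"
    using MW by (simp add: maxweight_schedule_def)
  have "weighted_inner \<delta> s' (X t) \<le> weighted_inner \<delta> (S t) (X t)"
    using MW s' by (simp add: maxweight_schedule_def)
  then have "(\<Sum>q\<in>UNIV. \<delta> q * (s' q - S t q) * X t q) / real t \<le> 0"
    unfolding weighted_inner_def
    by (intro divide_nonpos_nonneg) (simp_all add: sum_subtractf algebra_simps)
  then have maxweight: "(\<Sum>q\<in>UNIV. \<delta> q * (s' q - S t q) * (X t q / real t)) \<le> 0"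
    by (simp add: sum_divide_distrib)
  have error: "\<delta> q * (s' q - S t q) * ?e q \<le> B * \<delta> q * \<bar>?e q\<bar>" for q
  proof -
    have "0 \<le> s' q" "s' q \<le> B" "0 \<le> S t q" "S t q \<le> B"
      using bounded s' St by auto
    then have "\<bar>s' q - S t q\<bar> \<le> B"
      by linarith
    have "(s' q - S t q) * ?e q \<le> \<bar>s' q - S t q\<bar> * \<bar>?e q\<bar>"
      by (metis abs_ge_self abs_mult)
    also have "\<dots> \<le> B * \<bar>?e q\<bar>"
      by (rule mult_right_mono) (fact, simp)
    finally show ?thesis
      using delta_pos mult_left_mono[of _ _ "\<delta> q"] by (fastforce simp: less_imp_le mult.assoc)
  qed
  have "(\<Sum>q\<in>UNIV. \<delta> q * \<eta> q * (s' q - S t q))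
      = (\<Sum>q\<in>UNIV. \<delta> q * (s' q - S t q) * ?e q) + (\<Sum>q\<in>UNIV. \<delta> q * (s' q - S t q) * (X t q / real t))"
    by (simp add: sum.distrib[symmetric] algebra_simps)
  also have "\<dots> \<le> (\<Sum>q\<in>UNIV. B * \<delta> q * \<bar>?e q\<bar>) + 0"
    by (intro add_mono sum_mono error maxweight)
  finally show ?thesis by simp
qed

lemma maxweight_weighted_gap_limit_nonpos:
  fixes SS :: "('q::finite \<Rightarrow> real) set"
  assumes SS_fin: "finite SS" and SS_nonneg: "\<forall>s\<in>SS. \<forall>q. 0 \<le> s q"
    and arrivals: "\<forall>t q. 0 \<le> A t q" and delta_pos: "\<forall>q. 0 < \<delta> q"
    and MW: "maxweight_schedule SS \<delta> S X" and dyn: "queue_dynamics A S X"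
    and other_sched: "\<forall>t. S' t \<in> SS" and dyn': "queue_dynamics A S' X'"
    and X_lim: "\<forall>q. (\<lambda>t. X t q / real t) \<longlonglongrightarrow> \<eta> q"
    and X'_lim: "\<forall>q. (\<lambda>t. X' t q / real t) \<longlonglongrightarrow> \<eta>' q"
  shows "(\<Sum>q\<in>UNIV. \<delta> q * \<eta> q * (\<eta> q - \<eta>' q)) \<le> 0"
proof -
  define B where "B = (\<Sum>s\<in>SS. \<Sum>q\<in>UNIV. s q)"
  have bounded: "\<forall>s\<in>SS. \<forall>q. 0 \<le> s q \<and> s q \<le> B"
    unfolding B_def using SS_fin SS_nonneg
    by (auto intro!: order_trans[OF member_le_sum member_le_sum[of _ SS "\<lambda>s. \<Sum>q\<in>UNIV. s q"]]
        sum_nonneg)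
  have eta_nonneg: "0 \<le> \<eta> q" for q
    using X_lim by (intro queue_dynamics_growth_rate_nonneg[OF dyn arrivals]) auto
  define f where "f t = (\<Sum>q\<in>UNIV. \<delta> q * \<eta> q * (X t q - X' t q))" for t
  have "(\<lambda>t. f t / real t) \<longlonglongrightarrow> (\<Sum>q\<in>UNIV. \<delta> q * \<eta> q * (\<eta> q - \<eta>' q))"
  proof -
    have "f t / real t = (\<Sum>q\<in>UNIV. \<delta> q * \<eta> q * (X t q / real t - X' t q / real t))" for t
      by (simp add: f_def sum_divide_distrib diff_divide_distrib
          times_divide_eq_right[symmetric] del: times_divide_eq_right)
    then show ?thesis
      using X_lim X'_lim by (simp only:) (intro tendsto_intros, auto)
  qed
  moreover have "eventually (\<lambda>t. f (Suc t) - f t \<le> e) sequentially" if e: "e > 0" for e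
  proof -
    define err where "err t = (\<Sum>q\<in>UNIV. B * \<delta> q * \<bar>\<eta> q - X t q / real t\<bar>)" for t
    have "err \<longlonglongrightarrow> (\<Sum>q\<in>UNIV. B * \<delta> q * \<bar>\<eta> q - \<eta> q\<bar>)"
      unfolding err_def using X_lim by (intro tendsto_intros) auto
    then have "eventually (\<lambda>t. err t < e) sequentially"
      using e by (simp add: order_tendstoD)
    moreover have "eventually (\<lambda>t. \<forall>q. 0 < \<eta> q \<longrightarrow> B \<le> X t q) sequentially"
      using X_lim by (intro eventually_all_finite) (auto intro: eventually_ge_of_tendsto_div_pos)
    ultimately show ?thesis
    proof eventually_elim
      case (elim t)
      have "S t q \<le> X t q" if "0 < \<delta> q * \<eta> q" for q
      proof -
        have "0 < \<eta> q"
          using that delta_pos[rule_format, of q] by (simp add: zero_less_mult_iff)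
        moreover have "S t \<in> SS"
          using MW by (simp add: maxweight_schedule_def)
        ultimately show ?thesis
          using elim bounded by (meson order_trans)
      qed
      then have "f (Suc t) - f t \<le> (\<Sum>q\<in>UNIV. \<delta> q * \<eta> q * (S' t q - S t q))"
        unfolding f_def using delta_pos eta_nonneg
        by (intro weighted_gap_increment_le_service_gap[OF dyn dyn'])
          (auto simp: less_imp_le)
      also have "\<dots> \<le> err t"
        unfolding err_def using MW other_sched bounded delta_pos
        by (intro maxweight_service_gap_le) auto
      finally show ?case using elim by simp
    qed
  qed
  ultimately show ?thesis
    by (rule limit_div_nonpos_of_increments_eventually_le)
qed

lemma fair_vector_eq_scaled:
  fixes \<theta> \<eta> :: "'q::finite \<Rightarrow> real"
  assumes fair: "\<forall>q. \<eta> q / (\<Sum>k\<in>UNIV. \<eta> k) = \<theta> q" and theta_sum: "(\<Sum>q\<in>UNIV. \<theta> q) = 1"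
  shows "(\<Sum>k\<in>UNIV. \<eta> k) \<noteq> 0" and "\<eta> q = \<theta> q * (\<Sum>k\<in>UNIV. \<eta> k)"
proof -
  show nonzero: "(\<Sum>k\<in>UNIV. \<eta> k) \<noteq> 0"
  proof
    assume "(\<Sum>k\<in>UNIV. \<eta> k) = 0"
    then have "\<theta> = (\<lambda>q. 0)" using fair by auto
    then show False using theta_sum by simp
  qed
  show "\<eta> q = \<theta> q * (\<Sum>k\<in>UNIV. \<eta> k)"
    using fair nonzero by (metis nonzero_eq_divide_eq)
qed

lemma fair_vectors_le_of_weighted_gap_nonpos:
  fixes \<delta> \<theta> \<eta> \<eta>' :: "'q::finite \<Rightarrow> real"
  assumes delta_pos: "\<forall>q. 0 < \<delta> q" and theta_nonneg: "\<forall>q. 0 \<le> \<theta> q"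
    and theta_sum: "(\<Sum>q\<in>UNIV. \<theta> q) = 1" and eta_nonneg: "\<forall>q. 0 \<le> \<eta> q"
    and fair: "\<forall>q. \<eta> q / (\<Sum>k\<in>UNIV. \<eta> k) = \<theta> q"
    and fair': "\<forall>q. \<eta>' q / (\<Sum>k\<in>UNIV. \<eta>' k) = \<theta> q"
    and gap: "(\<Sum>q\<in>UNIV. \<delta> q * \<eta> q * (\<eta> q - \<eta>' q)) \<le> 0"
  shows "\<forall>q. \<eta> q \<le> \<eta>' q"
proof -
  define c c' where "c = (\<Sum>k\<in>UNIV. \<eta> k)" and "c' = (\<Sum>k\<in>UNIV. \<eta>' k)"
  note eta_eq = fair_vector_eq_scaled(2)[OF fair theta_sum, folded c_def]
  note eta'_eq = fair_vector_eq_scaled(2)[OF fair' theta_sum, folded c'_def]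
  have c_pos: "0 < c"
    using fair_vector_eq_scaled(1)[OF fair theta_sum] eta_nonneg
    unfolding c_def by (simp add: order_less_le sum_nonneg)
  define P where "P = (\<Sum>q\<in>UNIV. \<delta> q * \<theta> q * \<theta> q)"
  obtain q0 where "0 < \<theta> q0"
    using theta_sum theta_nonneg by (metis less_eq_real_def sum.neutral zero_neq_one)
  then have "0 < \<delta> q0 * \<theta> q0 * \<theta> q0"
    using delta_pos by simp
  also have "\<dots> \<le> P"
    unfolding P_def using delta_pos theta_nonneg by (intro member_le_sum) (auto simp: less_imp_le)
  finally have P_pos: "0 < P" .
  have "c * (c - c') * P \<le> 0"
    using gap unfolding P_def eta_eq eta'_eq by (simp add: sum_distrib_left algebra_simps)
  then have "c \<le> c'"
    using c_pos P_pos by (simp add: mult_le_0_iff mult.assoc zero_less_mult_iff)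
  then show ?thesis
    using eta_eq eta'_eq theta_nonneg by (simp add: mult_left_mono)
qed

theorem theorem2:
  fixes SS :: "('q::finite \<Rightarrow> real) set"
    and A :: "nat \<Rightarrow> 'q \<Rightarrow> real" and Abar \<rho> \<theta> \<delta> \<eta> \<eta>' :: "'q \<Rightarrow> real"
    and S X S' X' :: "nat \<Rightarrow> 'q \<Rightarrow> real"
  assumes SS_fin: "finite SS"
    and SS_nonneg: "\<forall>s\<in>SS. \<forall>q. 0 \<le> s q"
    and A_bounds: "\<forall>t q. 0 \<le> A t q \<and> A t q \<le> Abar q"
    and rho_lim: "\<forall>q. (\<lambda>t. (\<Sum>s<t. A s q) / real t) \<longlonglongrightarrow> \<rho> q"
    and rho_pos: "\<forall>q. 0 < \<rho> q"
    and overload: "\<rho> \<notin> stability_region SS"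
    and theta_nonneg: "\<forall>q. 0 \<le> \<theta> q"
    and theta_sum: "(\<Sum>q\<in>UNIV. \<theta> q) = 1"
    and delta_pos: "\<forall>q. 0 < \<delta> q"
    and MW: "maxweight_schedule SS \<delta> S X"
    and MW_dyn: "queue_dynamics A S X"
    and other_sched: "\<forall>t. S' t \<in> SS"
    and other_dyn: "queue_dynamics A S' X'"
    and X_lim: "\<forall>q. (\<lambda>t. X t q / real t) \<longlonglongrightarrow> \<eta> q"
    and X'_lim: "\<forall>q. (\<lambda>t. X' t q / real t) \<longlonglongrightarrow> \<eta>' q"
    and fair: "\<forall>q. \<eta> q / (\<Sum>k\<in>UNIV. \<eta> k) = \<theta> q"
    and fair': "\<forall>q. \<eta>' q / (\<Sum>k\<in>UNIV. \<eta>' k) = \<theta> q"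
  shows "\<forall>q. \<eta> q \<le> \<eta>' q"
proof -
  have arrivals: "\<forall>t q. 0 \<le> A t q"
    using A_bounds by blast
  have "\<forall>q. 0 \<le> \<eta> q"
    using X_lim by (auto intro: queue_dynamics_growth_rate_nonneg[OF MW_dyn arrivals])
  moreover have "(\<Sum>q\<in>UNIV. \<delta> q * \<eta> q * (\<eta> q - \<eta>' q)) \<le> 0"
    by (rule maxweight_weighted_gap_limit_nonpos[OF SS_fin SS_nonneg arrivals delta_pos MW MW_dyn
          other_sched other_dyn X_lim X'_lim])
  ultimately show ?thesis
    using fair_vectors_le_of_weighted_gap_nonpos[OF delta_pos theta_nonneg theta_sum _ fair fair']
    by blast
qed

end
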